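(* Let $k\in\mathbb{N}$ and $t\in(0,1)$, and let $A_{\infty,k,t}$ be the matrix defined in the context, with first row $(a_0,a_1,a_2,\ldots)$. Then, as identities of formal Laurent/power series in $s$ (equivalently, of convergent series for $|s|$ small and positive), $$\mathcal S(A_{\infty,k,t})(s)=\frac{1+ts}{s\bigl(1+(1-t)\sum_{j=1}^{k+1}(-s)^j\bigr)},\qquad \mathcal D(A_{\infty,k,t})(s,\lambda)=\frac{1+(1-t)\sum_{j=1}^{k+1}s^j}{1+s(\lambda-t)+\lambda(1-t)\sum_{j=2}^{k+2}s^j}.$$
   Context: For $x\in\mathbb R$, $x_+=\max\{x,0\}$. For $k\in\mathbb N$ and $t\in(0,1)$, $A_{\infty,k,t}=(A(i,j))_{i,j\ge1}$ is the infinite Toeplitz Hessenberg matrix with $A(i,j)=a_{j-i}$ for $j\ge i$, $A(i+1,i)=1$, and $A(i,j)=0$ for $i\ge j+2$, where the sequence $(a_0,a_1,\ldots)$ is the unique one for which the leading principal minors satisfy $d_n:=\det A(\{1,\dots,n\})=t^{(n-k-1)_+}$ for all $n\in\mathbb N$ (uniqueness holds because, via Laplace expansion along the first row, $d_n=\sum_{j=1}^n(-1)^{j-1}a_{j-1}d_{n-j}$ with $d_0=1$, a triangular system in the $a_j$). For an infinite Toeplitz matrix $T=(\tau(i-j))_{i,j}$, its symbol is the Laurent series $\mathcal S(T)(s)=\sum_{j=-\infty}^{\infty}\tau(-j)s^j$ (so here $\mathcal S(A_{\infty,k,t})(s)=s^{-1}+\sum_{m\ge0}a_ms^m$), and $\mathcal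 D(T)(s,\lambda)=\sum_{j\ge0}D_j(\lambda)s^j$ with $D_0=1$ and $D_j(\lambda)=\det(T(\{1,\dots,j\})-\lambda I_j)$ for $j\ge1$, where $T(\{1,\dots,j\})$ is the leading principal $j\times j$ submatrix. *)

theory Defs
  imports "HOL-Computational_Algebra.Formal_Laurent_Series" "Jordan_Normal_Form.Determinant"
begin

text \<open>Leading principal n x n submatrix of the infinite Toeplitz Hessenberg matrix with
  first row (a 0, a 1, ...): entry (i,j) (0-based) is a (j - i) if j >= i, 1 if i = j + 1,
  and 0 otherwise.\<close>
definition hess_entry :: "(nat \<Rightarrow> real) \<Rightarrow> nat \<Rightarrow> nat \<Rightarrow> real" where
  "hess_entry a i j = (if i \<le> j then a (j - i) else if i = Suc j then 1 else 0)"

definition hess_mat :: "(nat \<Rightarrow> real) \<Rightarrow> nat \<Rightarrow> real mat" where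
  "hess_mat a n = mat n n (\<lambda>(i, j). hess_entry a i j)"

definition hess_symbol :: "(nat \<Rightarrow> real) \<Rightarrow> real fls" where
  "hess_symbol a = fls_X_inv + fps_to_fls (Abs_fps a)"

definition hess_D :: "(nat \<Rightarrow> real) \<Rightarrow> real \<Rightarrow> real fps" where
  "hess_D a x = Abs_fps (\<lambda>j. if j = 0 then 1
                      else det (hess_mat a j - x \<cdot>\<^sub>m 1\<^sub>m j))"

end

theory Submission
  imports Defs
begin

(* Expanding the Hessenberg determinant along its last row gives
   d(n+1) = sum_{i<=n} (-1)^(n-i) a(n-i) d(i), i.e. D(s) (1 - s A(-s)) = 1 for the series
   D = sum d(n) s^n and A = sum a(m) s^m.  Substituting -s shows that the symbol
   s^-1 (1 + s A(s)) equals 1 / (s D(-s)); and since subtracting lambda from a(0) adds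
   lambda s to 1/D, the series of characteristic polynomials is D / (1 + lambda s D).
   For d(n) = t^(n-k-1)_+ one has D = N / (1 - t s) with N = 1 + (1-t)(s + ... + s^(k+1)),
   and both formulas follow. *)

(* Deleting the last row and the next-to-last column leaves a matrix of the same shape,
   so the Laplace expansion along the last row becomes an induction. *)
definition hess_mat_last_col ::
  "(nat \<Rightarrow> real) \<Rightarrow> nat \<Rightarrow> (nat \<Rightarrow> real) \<Rightarrow> real mat" where
  "hess_mat_last_col b n c = mat n n (\<lambda>(i, j). if j = n - 1 then c i else hess_entry b i j)"

lemma det_hess_mat_last_col:
  "det (hess_mat_last_col b (Suc m) c) = (\<Sum>i<Suc m. (-1) ^ (m - i) * c i * det (hess_mat b i))"
proof (induction m arbitrary: c)
  case 0
  have "hess_mat_last_col b 1 c = mat 1 1 (\<lambda>_. c 0)"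
    by (rule eq_matI) (auto simp: hess_mat_last_col_def)
  then show ?case
    by (simp add: hess_mat_def det_single)
next
  case (Suc m)
  let ?G = "hess_mat_last_col b (Suc (Suc m)) c"
  have G: "?G \<in> carrier_mat (Suc (Suc m)) (Suc (Suc m))"
    by (simp add: hess_mat_last_col_def)
  have "det ?G = (\<Sum>j<Suc (Suc m). ?G $$ (Suc m, j) * cofactor ?G (Suc m) j)"
    by (rule laplace_expansion_row[OF G]) simp
  also have "\<dots> = cofactor ?G (Suc m) m + c (Suc m) * cofactor ?G (Suc m) (Suc m)"
  proof -
    have "(\<Sum>j<m. ?G $$ (Suc m, j) * cofactor ?G (Suc m) j) = 0"
      by (intro sum.neutral) (auto simp: hess_mat_last_col_def hess_entry_def)
    then show ?thesis
      by (simp add: hess_mat_last_col_def hess_entry_def)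
  qed
  finally have "det ?G = cofactor ?G (Suc m) m + c (Suc m) * cofactor ?G (Suc m) (Suc m)" .
  moreover have "mat_delete ?G (Suc m) m = hess_mat_last_col b (Suc m) c"
    by (rule eq_matI) (auto simp: hess_mat_last_col_def mat_delete_def)
  moreover have "mat_delete ?G (Suc m) (Suc m) = hess_mat b (Suc m)"
    by (rule eq_matI) (auto simp: hess_mat_last_col_def hess_mat_def mat_delete_def)
  ultimately have "det ?G
      = - det (hess_mat_last_col b (Suc m) c) + c (Suc m) * det (hess_mat b (Suc m))"
    by (simp add: cofactor_def)
  also have "- det (hess_mat_last_col b (Suc m) c)
      = (\<Sum>i<Suc m. (-1) ^ (Suc m - i) * c i * det (hess_mat b i))"
    unfolding Suc.IH sum_negf[symmetric] by (rule sum.cong) (auto simp: Suc_diff_le)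
  finally show ?case by simp
qed

lemma det_hess_mat_Suc:
  "det (hess_mat b (Suc m)) = (\<Sum>i<Suc m. (-1) ^ (m - i) * b (m - i) * det (hess_mat b i))"
proof -
  have "hess_mat b (Suc m) = hess_mat_last_col b (Suc m) (\<lambda>i. b (m - i))"
    by (rule eq_matI) (auto simp: hess_mat_last_col_def hess_mat_def hess_entry_def)
  then show ?thesis by (simp add: det_hess_mat_last_col)
qed

definition hess_minors :: "(nat \<Rightarrow> real) \<Rightarrow> real fps" where
  "hess_minors b = Abs_fps (\<lambda>n. det (hess_mat b n))"

lemma hess_minors_nth_0 [simp]: "hess_minors b $ 0 = 1"
  by (simp add: hess_minors_def hess_mat_def)

lemma hess_minors_mult_eq_1:
  "hess_minors b * (1 - fps_X * Abs_fps (\<lambda>m. (-1) ^ m * b m)) = 1"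
proof -
  let ?D = "hess_minors b" and ?B = "Abs_fps (\<lambda>m. (-1::real) ^ m * b m)"
  have "?D - fps_X * (?D * ?B) = 1"
  proof (rule fps_ext)
    fix n show "(?D - fps_X * (?D * ?B)) $ n = 1 $ n"
    proof (cases n)
      case (Suc m)
      have "(?D * ?B) $ m = (\<Sum>i<Suc m. (-1) ^ (m - i) * b (m - i) * det (hess_mat b i))"
        by (simp add: hess_minors_def fps_mult_nth atLeast0AtMost lessThan_Suc_atMost[symmetric]
            algebra_simps)
      then show ?thesis using Suc by (simp add: hess_minors_def det_hess_mat_Suc)
    qed simp
  qed
  then show ?thesis by (simp add: algebra_simps)
qed

lemma hess_minors_reflect_mult_eq_1:
  "(hess_minors b oo - fps_X) * (1 + fps_X * Abs_fps b) = 1"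
proof -
  have "(hess_minors b * (1 - fps_X * Abs_fps (\<lambda>m. (-1) ^ m * b m))) oo - fps_X = 1"
    by (simp add: hess_minors_mult_eq_1)
  moreover have "Abs_fps (\<lambda>m. (-1) ^ m * b m) oo - fps_X = Abs_fps b"
    by (rule fps_ext) (simp add: fps_compose_uminus')
  ultimately show ?thesis
    by (simp add: fps_compose_mult_distrib fps_compose_sub_distrib)
qed

lemma hess_symbol_mult_fls_X: "hess_symbol a * fls_X = fps_to_fls (1 + fps_X * Abs_fps a)"
proof -
  have "fls_X_inv * fls_X = (1 :: real fls)"
    by (simp add: fls_X_inv_times_conv_shift fls_X_conv_shift_1)
  then show ?thesis
    by (simp add: hess_symbol_def ring_distribs fls_times_fps_to_fls mult.commute)
qed

lemma hess_symbol_eq_divide: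
  fixes P N :: "real fps"
  assumes "hess_minors a * P = N" and "P $ 0 \<noteq> 0"
  shows "hess_symbol a = fps_to_fls (P oo - fps_X) / (fls_X * fps_to_fls (N oo - fps_X))"
proof -
  have N_reflect: "N oo - fps_X = (hess_minors a oo - fps_X) * (P oo - fps_X)"
    by (simp add: fps_compose_mult_distrib flip: assms(1))
  have "(1 + fps_X * Abs_fps a) * (N oo - fps_X)
      = ((hess_minors a oo - fps_X) * (1 + fps_X * Abs_fps a)) * (P oo - fps_X)"
    by (simp only: N_reflect ac_simps)
  also have "\<dots> = P oo - fps_X"
    by (simp only: hess_minors_reflect_mult_eq_1 mult_1_left)
  finally have "hess_symbol a * (fls_X * fps_to_fls (N oo - fps_X)) = fps_to_fls (P oo - fps_X)"
    by (simp only: mult.assoc[symmetric] hess_symbol_mult_fls_X fls_times_fps_to_fls[symmetric])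
  moreover have "(N oo - fps_X) $ 0 \<noteq> 0"
    using assms(2) unfolding assms(1)[symmetric] by simp
  then have "fls_X * fps_to_fls (N oo - fps_X) \<noteq> 0"
    by (intro fls_mult_fls_X_nonzero fps_to_fls_nonzeroI fps_nonzeroI)
  ultimately show ?thesis
    by (simp add: nonzero_eq_divide_eq)
qed

lemma hess_D_eq_hess_minors: "hess_D a x = hess_minors (a(0 := a 0 - x))"
proof -
  have "hess_mat a j - x \<cdot>\<^sub>m 1\<^sub>m j = hess_mat (a(0 := a 0 - x)) j" for j
    by (rule eq_matI) (auto simp: hess_mat_def hess_entry_def)
  then show ?thesis
    by (intro fps_ext) (simp add: hess_D_def hess_minors_def hess_mat_def)
qed

lemma hess_D_mult: "hess_D a x * (1 + fps_const x * fps_X * hess_minors a) = hess_minors a"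
proof -
  let ?B = "\<lambda>b. Abs_fps (\<lambda>m. (-1::real) ^ m * b m)"
  have "?B (a(0 := a 0 - x)) = ?B a - fps_const x"
    by (rule fps_ext) simp
  then have "1 - fps_X * ?B (a(0 := a 0 - x)) = (1 - fps_X * ?B a) + fps_const x * fps_X"
    by (simp only: right_diff_distrib) (simp add: algebra_simps)
  then have "hess_D a x * ((1 - fps_X * ?B a) + fps_const x * fps_X) = 1"
    using hess_minors_mult_eq_1[of "a(0 := a 0 - x)"] by (simp only: hess_D_eq_hess_minors)
  then have "hess_minors a
      = hess_D a x * ((1 - fps_X * ?B a) + fps_const x * fps_X) * hess_minors a"
    by simp
  also have "\<dots> = hess_D a x *
      (hess_minors a * (1 - fps_X * ?B a) + fps_const x * fps_X * hess_minors a)"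
    by (simp only: algebra_simps)
  also have "\<dots> = hess_D a x * (1 + fps_const x * fps_X * hess_minors a)"
    by (simp only: hess_minors_mult_eq_1)
  finally show ?thesis ..
qed

lemma hess_D_eq_divide:
  fixes P N :: "real fps"
  assumes "hess_minors a * P = N" and "P $ 0 \<noteq> 0"
  shows "hess_D a x = N / (P + fps_const x * fps_X * N)"
proof -
  have "hess_D a x * (P + fps_const x * fps_X * N)
      = hess_D a x * (1 + fps_const x * fps_X * hess_minors a) * P"
    by (simp only: assms(1)[symmetric] algebra_simps mult_1_left)
  also have "\<dots> = N"
    by (simp only: hess_D_mult assms(1))
  finally have D_eq: "hess_D a x * (P + fps_const x * fps_X * N) = N" .
  have "P + fps_const x * fps_X * N \<noteq> 0"
    using assms(2) by (intro fps_nonzeroI[of _ 0]) simp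
  then have "hess_D a x
      = hess_D a x * (P + fps_const x * fps_X * N) / (P + fps_const x * fps_X * N)"
    by simp
  then show ?thesis
    by (simp only: D_eq)
qed

lemma fps_delayed_geometric_mult:
  fixes t :: "'a::comm_ring_1"
  shows "Abs_fps (\<lambda>n. t ^ (n - k - 1)) * (1 - fps_const t * fps_X)
           = 1 + fps_const (1 - t) * (\<Sum>j = 1..k+1. fps_X ^ j)"
proof (rule fps_ext)
  fix n
  consider "n = 0" | "1 \<le> n \<and> n \<le> k + 1" | "k + 2 \<le> n" by linarith
  then show "(Abs_fps (\<lambda>n. t ^ (n - k - 1)) * (1 - fps_const t * fps_X)) $ n
               = (1 + fps_const (1 - t) * (\<Sum>j = 1..k+1. fps_X ^ j)) $ n"
  proof cases
    case 3
    then have "n - Suc k = Suc (n - Suc (Suc k))" by auto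
    with 3 show ?thesis by (simp add: algebra_simps fps_sum_nth)
  qed (auto simp: algebra_simps fps_sum_nth)
qed

lemma fps_to_fls_sum: "fps_to_fls (sum f A) = (\<Sum>j\<in>A. fps_to_fls (f j))"
  by (induct A rule: infinite_finite_induct) auto

lemma hess_symbol_eq_if_hess_minors:
  assumes "hess_minors a * (1 - fps_const t * fps_X)
             = 1 + fps_const (1 - t) * (\<Sum>j = 1..k+1. fps_X ^ j)"
  shows "hess_symbol a = (1 + fls_const t * fls_X) /
           (fls_X * (1 + fls_const (1 - t) * (\<Sum>j = 1..k+1. (- fls_X) ^ j)))"
proof -
  have "(1 - fps_const t * fps_X) oo - fps_X = 1 + fps_const t * fps_X"
    by (simp add: fps_compose_sub_distrib fps_compose_mult_distrib)
  moreover have "(1 + fps_const (1 - t) * (\<Sum>j = 1..k+1. fps_X ^ j)) oo - fps_X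
      = 1 + fps_const (1 - t) * (\<Sum>j = 1..k+1. (- fps_X) ^ j)"
    by (simp add: fps_compose_add_distrib fps_compose_mult_distrib fps_compose_sum_distrib
        flip: fps_compose_power)
  ultimately show ?thesis
    using hess_symbol_eq_divide[OF assms]
    by (simp add: fps_to_fls_sum fls_times_fps_to_fls fps_to_fls_power)
qed

lemma hess_D_eq_if_hess_minors:
  assumes "hess_minors a * (1 - fps_const t * fps_X)
             = 1 + fps_const (1 - t) * (\<Sum>j = 1..k+1. fps_X ^ j)"
  shows "hess_D a x = (1 + fps_const (1 - t) * (\<Sum>j = 1..k+1. fps_X ^ j)) /
           (1 + fps_X * fps_const (x - t)
              + fps_const x * fps_const (1 - t) * (\<Sum>j = 2..k+2. fps_X ^ j))"
proof -
  have "(\<Sum>j = 2..k+2. fps_X ^ j) = (\<Sum>j = Suc 1..Suc (k+1). fps_X ^ j :: real fps)"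
    by (simp add: numeral_2_eq_2)
  also have "\<dots> = fps_X * (\<Sum>j = 1..k+1. fps_X ^ j)"
    by (simp only: sum.shift_bounds_cl_Suc_ivl sum_distrib_left power_Suc)
  finally have "1 - fps_const t * fps_X
        + fps_const x * fps_X * (1 + fps_const (1 - t) * (\<Sum>j = 1..k+1. fps_X ^ j))
      = 1 + fps_X * fps_const (x - t)
          + fps_const x * fps_const (1 - t) * (\<Sum>j = 2..k+2. fps_X ^ j)"
    unfolding fps_const_sub[symmetric]
    by (simp add: algebra_simps del: fps_const_sub fps_const_mult)
  moreover have "(1 - fps_const t * fps_X) $ 0 \<noteq> 0"
    by simp
  ultimately show ?thesis
    using hess_D_eq_divide[OF assms] by metis
qed

theorem proposition1:
  fixes k :: nat and t :: real and a :: "nat \<Rightarrow> real"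
  assumes "0 < t" and "t < 1"
    and minors: "\<And>n. n \<ge> 1 \<Longrightarrow> det (hess_mat a n) = t ^ (n - k - 1)"
  shows "hess_symbol a =
           (1 + fls_const t * fls_X) /
           (fls_X * (1 + fls_const (1 - t) * (\<Sum>j = 1..k+1. (- fls_X) ^ j))) \<and>
         (\<forall>x. hess_D a x =
           (1 + fps_const (1 - t) * (\<Sum>j = 1..k+1. fps_X ^ j)) /
           (1 + fps_X * fps_const (x - t)
              + fps_const x * fps_const (1 - t) * (\<Sum>j = 2..k+2. fps_X ^ j)))"
proof -
  have "det (hess_mat a n) = t ^ (n - k - 1)" for n
    using minors[of n] by (cases n) (simp_all add: hess_mat_def)
  then have "hess_minors a * (1 - fps_const t * fps_X)
      = 1 + fps_const (1 - t) * (\<Sum>j = 1..k+1. fps_X ^ j)"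
    using fps_delayed_geometric_mult[of t k] by (simp add: hess_minors_def)
  then show ?thesis
    using hess_symbol_eq_if_hess_minors hess_D_eq_if_hess_minors by blast
qed

end
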